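(* For every Euclidean modal logic $\mathbf{L}$, $\mathtt{S}_{\mathbf{L}}$ is a closed subset of $\mathbf{N}^{+}\times\mathbf{N}^{-}$.
   Context: Modal formulas (propositional variables, $\bot,\neg,\vee,\Box$) have standard Kripke semantics on frames $(W,R)$ ($W$ non-empty, $R\subseteq W\times W$); validity in a frame means truth at all points under all valuations. A (normal) modal logic contains all tautologies and K axioms and is closed under uniform substitution, modus ponens and necessitation; a Euclidean modal logic is one not containing $\bot$ and containing $\Diamond\psi\to\Box\Diamond\psi$ for all $\psi$. $\mathbf{N}^{+}=\{1,2,\dots\}$, $\mathbf{N}^{-}=\{-1,0,1,\dots\}$. For $m\in\mathbf{N}^{+}$, $n\ge0$, the flower $\mathcal{F}_m^n$ has universe $\{0,\dots,m+n\}$ and relation $(\{0\}\times\{1,\dots,m\})\cup\{1,\dots,m+n\}^2$; $\mathcal{F}_m^{-1}$ has universe $\{1,\dots,m\}$ and relation $\{1,\dots,m\}^2$. $\mathtt{S}_{\mathbf{L}}=\{(m,n)\in\mathbf{N}^{+}\times\mathbf{N}^{-}:\ \mathbf{L}\text{ valid in }\mathcal{F}_m^n\}$. On $\mathbf{N}^{+}\times\mathbf{N}^{-}$, $(m,n)\ll(m',n')$ iff $m\le m'$ and $n\le n'$; a subset $\mathtt{S}$ is closed if $(m,n)\in\mathtt{S}$ and $(m',n')\ll(m,n)$ imply $(m',n')\in\mathtt{S}$. *)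

theory Defs
  imports Main
begin

datatype fm = Var nat | Bot | Neg fm | Or fm fm | Box fm

definition Imp :: "fm \<Rightarrow> fm \<Rightarrow> fm" where
  "Imp a b = Or (Neg a) b"

definition Dia :: "fm \<Rightarrow> fm" where
  "Dia a = Neg (Box (Neg a))"

fun sat :: "'w set \<Rightarrow> ('w \<Rightarrow> 'w \<Rightarrow> bool) \<Rightarrow> (nat \<Rightarrow> 'w \<Rightarrow> bool) \<Rightarrow> 'w \<Rightarrow> fm \<Rightarrow> bool" where
  "sat W R V w (Var p) = V p w"
| "sat W R V w Bot = False"
| "sat W R V w (Neg a) = (\<not> sat W R V w a)"
| "sat W R V w (Or a b) = (sat W R V w a \<or> sat W R V w b)"
| "sat W R V w (Box a) = (\<forall>v\<in>W. R w v \<longrightarrow> sat W R V v a)"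

definition valid_frame :: "'w set \<Rightarrow> ('w \<Rightarrow> 'w \<Rightarrow> bool) \<Rightarrow> fm \<Rightarrow> bool" where
  "valid_frame W R a = (\<forall>V. \<forall>w\<in>W. sat W R V w a)"

definition valid_logic_frame :: "'w set \<Rightarrow> ('w \<Rightarrow> 'w \<Rightarrow> bool) \<Rightarrow> fm set \<Rightarrow> bool" where
  "valid_logic_frame W R L = (\<forall>a\<in>L. valid_frame W R a)"

fun peval :: "(fm \<Rightarrow> bool) \<Rightarrow> fm \<Rightarrow> bool" where
  "peval e (Var p) = e (Var p)"
| "peval e Bot = False"
| "peval e (Neg a) = (\<not> peval e a)"
| "peval e (Or a b) = (peval e a \<or> peval e b)"
| "peval e (Box a) = e (Box a)"

definition tautology :: "fm \<Rightarrow> bool" where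
  "tautology a = (\<forall>e. peval e a)"

fun subst :: "(nat \<Rightarrow> fm) \<Rightarrow> fm \<Rightarrow> fm" where
  "subst s (Var p) = s p"
| "subst s Bot = Bot"
| "subst s (Neg a) = Neg (subst s a)"
| "subst s (Or a b) = Or (subst s a) (subst s b)"
| "subst s (Box a) = Box (subst s a)"

definition normal_logic :: "fm set \<Rightarrow> bool" where
  "normal_logic L =
    ((\<forall>a. tautology a \<longrightarrow> a \<in> L)
   \<and> (\<forall>a b. Imp (Box (Imp a b)) (Imp (Box a) (Box b)) \<in> L)
   \<and> (\<forall>s a. a \<in> L \<longrightarrow> subst s a \<in> L)
   \<and> (\<forall>a b. a \<in> L \<longrightarrow> Imp a b \<in> L \<longrightarrow> b \<in> L)
   \<and> (\<forall>a. a \<in> L \<longrightarrow> Box a \<in> L))"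

definition euclidean_logic :: "fm set \<Rightarrow> bool" where
  "euclidean_logic L =
    (normal_logic L \<and> Bot \<notin> L \<and> (\<forall>a. Imp (Dia a) (Box (Dia a)) \<in> L))"

definition flower_W :: "nat \<Rightarrow> int \<Rightarrow> nat set" where
  "flower_W m n = (if n = -1 then {1..m} else {0..m + nat n})"

definition flower_R :: "nat \<Rightarrow> int \<Rightarrow> nat \<Rightarrow> nat \<Rightarrow> bool" where
  "flower_R m n x y =
    (if n = -1 then (x \<in> {1..m} \<and> y \<in> {1..m})
     else ((x = 0 \<and> y \<in> {1..m}) \<or> (x \<in> {1..m + nat n} \<and> y \<in> {1..m + nat n})))"

definition S_L :: "fm set \<Rightarrow> (nat \<times> int) set" where
  "S_L L = {(m, n). 1 \<le> m \<and> -1 \<le> n \<and> valid_logic_frame (flower_W m n) (flower_R m n) L}"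

definition closed_set :: "(nat \<times> int) set \<Rightarrow> bool" where
  "closed_set S =
    (S \<subseteq> {(m, n). 1 \<le> m \<and> -1 \<le> n} \<and>
     (\<forall>m n m' n'. (m, n) \<in> S \<and> 1 \<le> m' \<and> -1 \<le> n' \<and> m' \<le> m \<and> n' \<le> n \<longrightarrow> (m', n') \<in> S))"

end

theory Submission
  imports Defs
begin

text \<open>Validity of a formula is preserved under passing to generated subframes and to
  surjective p-morphic images. For m' \<le> m and n' \<le> n the flower F_m'^n' is such an image of
  a generated subframe of F_m^n: petals beyond m' are identified with petal m', surplus
  cluster points are sent to petal 1, and when n' = -1 the root 0 is discarded first. So the
  set of flowers validating any set of formulas is closed downwards.\<close>

definition p_morphism ::
  "'a set \<Rightarrow> ('a \<Rightarrow> 'a \<Rightarrow> bool) \<Rightarrow> 'b set \<Rightarrow> ('b \<Rightarrow> 'b \<Rightarrow> bool) \<Rightarrow> ('a \<Rightarrow> 'b) \<Rightarrow> bool" where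
  "p_morphism W R W' R' f \<longleftrightarrow>
     f ` W \<subseteq> W'
   \<and> (\<forall>x\<in>W. \<forall>y\<in>W. R x y \<longrightarrow> R' (f x) (f y))
   \<and> (\<forall>x\<in>W. \<forall>z\<in>W'. R' (f x) z \<longrightarrow> (\<exists>y\<in>W. R x y \<and> f y = z))"

definition generated_subframe :: "'a set \<Rightarrow> 'a set \<Rightarrow> ('a \<Rightarrow> 'a \<Rightarrow> bool) \<Rightarrow> bool" where
  "generated_subframe A W R \<longleftrightarrow> A \<subseteq> W \<and> (\<forall>x\<in>A. \<forall>y\<in>W. R x y \<longrightarrow> y \<in> A)"

lemma sat_p_morphism:
  assumes "p_morphism W R W' R' f" and "x \<in> W"
  shows "sat W' R' V (f x) a = sat W R (\<lambda>p w. V p (f w)) x a"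
  using assms(2)
proof (induction a arbitrary: x)
  case (Box a)
  have "(\<forall>z\<in>W'. R' (f x) z \<longrightarrow> sat W' R' V z a) \<longleftrightarrow>
        (\<forall>y\<in>W. R x y \<longrightarrow> sat W' R' V (f y) a)"
    using assms(1) Box.prems unfolding p_morphism_def by blast
  then show ?case
    using Box.IH by auto
qed auto

lemma valid_frame_p_morphic_image:
  assumes "p_morphism W R W' R' f" and "f ` W = W'" and "valid_frame W R a"
  shows "valid_frame W' R' a"
  using assms sat_p_morphism[OF assms(1)] unfolding valid_frame_def by blast

lemma p_morphism_inclusion:
  assumes "generated_subframe A W R"
  shows "p_morphism A R W R id"
  using assms unfolding generated_subframe_def p_morphism_def by auto

lemma valid_frame_generated_subframe:
  assumes "generated_subframe A W R" and "valid_frame W R a"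
  shows "valid_frame A R a"
  unfolding valid_frame_def
proof (intro allI ballI)
  fix V x assume "x \<in> A"
  then have "x \<in> W"
    using assms(1) unfolding generated_subframe_def by blast
  then show "sat A R V x a"
    using sat_p_morphism[OF p_morphism_inclusion[OF assms(1)] \<open>x \<in> A\<close>, of V a] assms(2)
    unfolding valid_frame_def by simp
qed

definition flower_collapse_domain :: "nat \<Rightarrow> int \<Rightarrow> int \<Rightarrow> nat set" where
  "flower_collapse_domain m n n' = (if n' = -1 then flower_W m n - {0} else flower_W m n)"

definition flower_collapse :: "nat \<Rightarrow> nat \<Rightarrow> int \<Rightarrow> nat \<Rightarrow> nat" where
  "flower_collapse m m' n' x =
     (if x = 0 then 0 else if x \<le> m then min x m' else if x - m \<le> nat n' then m' + (x - m) else 1)"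

definition flower_lift :: "nat \<Rightarrow> nat \<Rightarrow> nat \<Rightarrow> nat" where
  "flower_lift m m' z = (if z \<le> m' then z else m + (z - m'))"

lemma generated_subframe_flower_collapse_domain:
  "generated_subframe (flower_collapse_domain m n n') (flower_W m n) (flower_R m n)"
  unfolding generated_subframe_def flower_collapse_domain_def flower_R_def flower_W_def
  by auto

context
  fixes m m' :: nat and n n' :: int
  assumes flower_le: "1 \<le> m'" "m' \<le> m" "-1 \<le> n'" "n' \<le> n"
begin

lemma flower_collapse_mem:
  "x \<in> flower_collapse_domain m n n' \<Longrightarrow> flower_collapse m m' n' x \<in> flower_W m' n'"
  using flower_le
  by (auto simp: flower_collapse_def flower_collapse_domain_def flower_W_def split: if_splits)

lemma flower_lift_mem:
  "z \<in> flower_W m' n' \<Longrightarrow> flower_lift m m' z \<in> flower_collapse_domain m n n'"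
  using flower_le
  by (auto simp: flower_lift_def flower_collapse_domain_def flower_W_def split: if_splits)

lemma flower_collapse_lift:
  "z \<in> flower_W m' n' \<Longrightarrow> flower_collapse m m' n' (flower_lift m m' z) = z"
  using flower_le
  by (auto simp: flower_lift_def flower_collapse_def flower_W_def split: if_splits)

lemma flower_R_collapse:
  "x \<in> flower_collapse_domain m n n' \<Longrightarrow> y \<in> flower_collapse_domain m n n' \<Longrightarrow>
    flower_R m n x y \<Longrightarrow> flower_R m' n' (flower_collapse m m' n' x) (flower_collapse m m' n' y)"
  using flower_le
  by (auto simp: flower_collapse_def flower_collapse_domain_def flower_W_def flower_R_def
      split: if_splits)

lemma flower_R_lift:
  "x \<in> flower_collapse_domain m n n' \<Longrightarrow> z \<in> flower_W m' n' \<Longrightarrow>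
    flower_R m' n' (flower_collapse m m' n' x) z \<Longrightarrow> flower_R m n x (flower_lift m m' z)"
  using flower_le
  by (auto simp: flower_lift_def flower_collapse_def flower_collapse_domain_def flower_W_def
      flower_R_def split: if_splits)

lemma p_morphism_flower_collapse:
  "p_morphism (flower_collapse_domain m n n') (flower_R m n)
     (flower_W m' n') (flower_R m' n') (flower_collapse m m' n')"
  unfolding p_morphism_def
proof (intro conjI ballI impI)
  fix x z
  assume "x \<in> flower_collapse_domain m n n'" "z \<in> flower_W m' n'"
    and "flower_R m' n' (flower_collapse m m' n' x) z"
  then show "\<exists>y\<in>flower_collapse_domain m n n'. flower_R m n x y \<and> flower_collapse m m' n' y = z"
    using flower_R_lift flower_collapse_lift flower_lift_mem by blast
qed (use flower_collapse_mem flower_R_collapse in blast)+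

lemma flower_collapse_surj:
  "flower_collapse m m' n' ` flower_collapse_domain m n n' = flower_W m' n'"
proof
  show "flower_W m' n' \<subseteq> flower_collapse m m' n' ` flower_collapse_domain m n n'"
    using flower_collapse_lift flower_lift_mem by (metis image_eqI subsetI)
qed (use flower_collapse_mem in blast)

end

lemma valid_frame_flower_mono:
  assumes "1 \<le> m'" "m' \<le> m" "-1 \<le> n'" "n' \<le> n"
    and "valid_frame (flower_W m n) (flower_R m n) a"
  shows "valid_frame (flower_W m' n') (flower_R m' n') a"
proof -
  have "valid_frame (flower_collapse_domain m n n') (flower_R m n) a"
    using generated_subframe_flower_collapse_domain assms(5) by (rule valid_frame_generated_subframe)
  with p_morphism_flower_collapse[OF assms(1-4)] flower_collapse_surj[OF assms(1-4)]
  show ?thesis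
    by (rule valid_frame_p_morphic_image)
qed

theorem lemma35:
  assumes "euclidean_logic L"
  shows "closed_set (S_L L)"
  unfolding closed_set_def S_L_def valid_logic_frame_def
  using valid_frame_flower_mono by auto

end
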